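(* Every analytic map $\phi:B_E\to B_E$ induces a bounded composition operator $C_\phi:\mathcal B(B_E)\to \mathcal B(B_E)$, $C_\phi f=f\circ\phi$.
   Context: $E$ is a complex Hilbert space of arbitrary dimension with open unit ball $B_E$. The Bloch space $\mathcal B(B_E)$ is the space of analytic $f:B_E\to\mathbb C$ with $\|f\|_{\mathcal B(B_E)}=\sup_{x\in B_E}(1-\|x\|^2)\|f'(x)\|<\infty$, endowed with the norm $\|f\|_{Bloch(B_E)}=|f(0)|+\|f\|_{inv}$, where $\|f\|_{inv}=\sup_{x\in B_E}\|\nabla(f\circ\varphi_x)(0)\|$ is an equivalent seminorm; here $\nabla g(x)\in E$ is the vector with $g'(x)(y)=\langle y,\overline{\nabla g(x)}\rangle$ (conjugation taken coordinatewise in a fixed orthonormal basis), and $\varphi_a(y)=(s_aQ_a+P_a)\big(\frac{a-y}{1-\langle y,a\rangle}\big)$ is the Möbius automorphism of $B_E$, with $s_a=\sqrt{1-\|a\|^2}$, $P_a$ the orthogonal projection onto $\mathbb C a$ and $Q_a=I-P_a$. *)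

theory Defs
  imports "HOL-Analysis.Analysis"
begin

text \<open>The library has only real inner product spaces. A complex Hilbert space is a
real Hilbert space (with inner product Re of the complex one) together with a
complex scalar multiplication extending the real one, for which the norm is
absolutely homogeneous.\<close>

class chilbert = real_inner + complete_space +
  fixes scaleC :: "complex \<Rightarrow> 'a \<Rightarrow> 'a"
  assumes scaleC_add_right: "scaleC c (x + y) = scaleC c x + scaleC c y"
    and scaleC_add_left: "scaleC (b + c) x = scaleC b x + scaleC c x"
    and scaleC_scaleC: "scaleC b (scaleC c x) = scaleC (b * c) x"
    and scaleC_of_real: "scaleC (complex_of_real r) x = scaleR r x"
    and norm_scaleC: "norm (scaleC c x) = cmod c * norm x"

text \<open>Complex inner product, linear in the first argument, with Re = real inner product.\<close>
definition cinner :: "'a::chilbert \<Rightarrow> 'a \<Rightarrow> complex" where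
  "cinner x y = Complex (x \<bullet> y) (scaleC (- \<i>) x \<bullet> y)"

definition unit_ball :: "'a::chilbert set" where
  "unit_ball = ball 0 1"

definition clinear_functional :: "('a::chilbert \<Rightarrow> complex) \<Rightarrow> bool" where
  "clinear_functional L \<longleftrightarrow> bounded_linear L \<and> (\<forall>c y. L (scaleC c y) = c * L y)"

definition clinear_map :: "('a::chilbert \<Rightarrow> 'b::chilbert) \<Rightarrow> bool" where
  "clinear_map L \<longleftrightarrow> bounded_linear L \<and> (\<forall>c y. L (scaleC c y) = scaleC c (L y))"

definition analytic_fun :: "('a::chilbert \<Rightarrow> complex) \<Rightarrow> bool" where
  "analytic_fun f \<longleftrightarrow>
     (\<forall>x\<in>unit_ball. \<exists>L. clinear_functional L \<and> (f has_derivative L) (at x))"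

definition analytic_self_map :: "('a::chilbert \<Rightarrow> 'a) \<Rightarrow> bool" where
  "analytic_self_map \<phi> \<longleftrightarrow> \<phi> ` unit_ball \<subseteq> unit_ball \<and>
     (\<forall>x\<in>unit_ball. \<exists>L. clinear_map L \<and> (\<phi> has_derivative L) (at x))"

definition fderiv :: "('a::chilbert \<Rightarrow> complex) \<Rightarrow> 'a \<Rightarrow> ('a \<Rightarrow> complex)" where
  "fderiv f x = (SOME L. (f has_derivative L) (at x))"

definition proj_line :: "'a::chilbert \<Rightarrow> 'a \<Rightarrow> 'a" where
  "proj_line a z = scaleC (cinner z a / complex_of_real ((norm a)\<^sup>2)) a"

definition mobius :: "'a::chilbert \<Rightarrow> 'a \<Rightarrow> 'a" where
  "mobius a y =
     (let z = scaleC (1 / (1 - cinner y a)) (a - y)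
      in scaleR (sqrt (1 - (norm a)\<^sup>2)) (z - proj_line a z) + proj_line a z)"

text \<open>Bloch seminorm, Bloch space and the norm |f(0)| + ||f||_inv.
  Note ||nabla g(0)|| equals the operator norm of g'(0) (Riesz).\<close>
definition bloch_seminorm :: "('a::chilbert \<Rightarrow> complex) \<Rightarrow> real" where
  "bloch_seminorm f = (SUP x\<in>unit_ball. (1 - (norm x)\<^sup>2) * onorm (fderiv f x))"

definition bloch_space :: "('a::chilbert \<Rightarrow> complex) set" where
  "bloch_space = {f. analytic_fun f \<and>
      bdd_above ((\<lambda>x. (1 - (norm x)\<^sup>2) * onorm (fderiv f x)) ` unit_ball)}"

definition inv_seminorm :: "('a::chilbert \<Rightarrow> complex) \<Rightarrow> real" where
  "inv_seminorm f = (SUP x\<in>unit_ball. onorm (fderiv (f \<circ> mobius x) 0))"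

definition bloch_norm :: "('a::chilbert \<Rightarrow> complex) \<Rightarrow> real" where
  "bloch_norm f = cmod (f 0) + inv_seminorm f"

end

theory Submission
  imports Defs "HOL-Complex_Analysis.Complex_Analysis"
begin

(*
  For x in the ball, psi = phi_(phi x) o phi o phi_x is an analytic self-map of the ball fixing 0,
  so by the Schwarz lemma on complex lines through 0 the derivative at 0 of
  (f o phi) o phi_x = (f o phi_(phi x)) o psi has norm at most that of f o phi_(phi x).  Hence
  ||f o phi||_inv <= ||f||_inv, while |f(phi 0) - f 0| is controlled by the mean value inequality
  along [0, phi 0] and the bound (1 - ||p||^2) ||f'(p)|| <= ||f||_inv (chain rule at phi_p(p) = 0).

  That ||f||_inv is finite on the Bloch space needs the converse estimate ||f||_inv <= 33 ||f||_B.
  As phi_a'(0) = -(s^2 P_a + s Q_a) with s = sqrt (1 - ||a||^2), it reduces to the tangential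
  estimate |f'(a) w| <= 32 ||f||_B / s for unit vectors w orthogonal to a.  This is proved by
  induction on the depth of a: for the radial point a' with 1 - ||a'||^2 = 4 s^2, the Cauchy
  inequality on the disc of radius s/2 in direction w bounds |f'(a) w - f'(a') w| by 16 ||f||_B / s.
*)

section \<open>Complex Hilbert spaces\<close>

definition J :: "'a::chilbert \<Rightarrow> 'a" where "J x = scaleC \<i> x"

lemma scaleC_zero_right[simp]: "scaleC c (0::'a::chilbert) = 0"
  by (metis add_cancel_right_right scaleC_add_right)
lemma scaleC_zero_left[simp]: "scaleC 0 (x::'a::chilbert) = 0"
  by (metis scaleC_of_real of_real_0 scale_zero_left)
lemma scaleC_one[simp]: "scaleC 1 (x::'a::chilbert) = x"
  by (metis scaleC_of_real of_real_1 scale_one)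
lemma scaleC_minus_right: "scaleC c (- x::'a::chilbert) = - scaleC c x"
  by (metis add.right_inverse add_cancel_right_left eq_neg_iff_add_eq_0 scaleC_add_right scaleC_zero_right)
lemma scaleC_diff_right: "scaleC c (x - y::'a::chilbert) = scaleC c x - scaleC c y"
  by (metis diff_conv_add_uminus scaleC_add_right scaleC_minus_right)
lemma scaleC_minus_left: "scaleC (- c) (x::'a::chilbert) = - scaleC c x"
  by (metis add.right_inverse add_cancel_right_left eq_neg_iff_add_eq_0 scaleC_add_left scaleC_zero_left)
lemma scaleC_diff_left: "scaleC (b - c) (x::'a::chilbert) = scaleC b x - scaleC c x"
  by (metis diff_conv_add_uminus scaleC_add_left scaleC_minus_left)
lemma scaleC_scaleR_comm: "scaleC c (scaleR r x) = scaleR r (scaleC c (x::'a::chilbert))"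
  by (metis scaleC_of_real scaleC_scaleC mult.commute)
lemma scaleC_of_real_mult: "scaleC (complex_of_real r * c) x = scaleR r (scaleC c (x::'a::chilbert))"
  by (metis scaleC_of_real scaleC_scaleC)

lemma scaleC_eq_Re_Im: "scaleC c (x::'a::chilbert) = scaleR (Re c) x + scaleR (Im c) (J x)"
proof -
  have "c = complex_of_real (Re c) + complex_of_real (Im c) * \<i>"
    by (simp add: complex_eq_iff)
  then have "scaleC c x = scaleC (complex_of_real (Re c)) x + scaleC (complex_of_real (Im c) * \<i>) x"
    by (metis scaleC_add_left)
  then show ?thesis by (simp add: scaleC_of_real scaleC_of_real_mult J_def)
qed

lemma J_add: "J (x + y) = J x + J (y::'a::chilbert)" unfolding J_def by (rule scaleC_add_right)
lemma J_scaleR: "J (scaleR r x) = scaleR r (J (x::'a::chilbert))" unfolding J_def by (rule scaleC_scaleR_comm)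
lemma J_zero[simp]: "J 0 = (0::'a::chilbert)" unfolding J_def by simp
lemma J_J[simp]: "J (J (x::'a::chilbert)) = - x"
  unfolding J_def by (metis scaleC_scaleC complex_i_mult_minus scaleC_minus_left scaleC_one)
lemma norm_J[simp]: "norm (J (x::'a::chilbert)) = norm x"
  by (simp add: norm_scaleC J_def)

lemma inner_J_J[simp]: "J x \<bullet> J (y::'a::chilbert) = x \<bullet> y"
proof -
  have "norm (J (x+y))^2 = norm (x+y)^2" by simp
  then have e: "(J x + J y) \<bullet> (J x + J y) = (x+y) \<bullet> (x+y)"
    by (simp add: J_add power2_norm_eq_inner)
  have "J x \<bullet> J x = x \<bullet> x" "J y \<bullet> J y = y \<bullet> y"
    by (metis norm_J power2_norm_eq_inner)+
  with e show ?thesis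
    by (simp add: inner_add_left inner_add_right inner_commute)
qed
lemma inner_J_left: "J x \<bullet> (y::'a::chilbert) = - (x \<bullet> J y)"
  by (metis J_J inner_J_J inner_minus_left)
lemma inner_J_self[simp]: "J x \<bullet> (x::'a::chilbert) = 0"
  by (metis inner_J_left inner_commute neg_equal_zero)
lemma inner_self_J[simp]: "x \<bullet> J (x::'a::chilbert) = 0"
  by (metis inner_commute inner_J_self)

lemma cinner_eq_inner_J: "cinner x (y::'a::chilbert) = Complex (x \<bullet> y) (x \<bullet> J y)"
proof -
  have "scaleC (- \<i>) x = - J x" unfolding J_def by (rule scaleC_minus_left)
  then show ?thesis unfolding cinner_def by (simp add: inner_J_left)
qed
lemma Re_cinner[simp]: "Re (cinner x (y::'a::chilbert)) = x \<bullet> y" by (simp add: cinner_eq_inner_J)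
lemma Im_cinner[simp]: "Im (cinner x (y::'a::chilbert)) = x \<bullet> J y" by (simp add: cinner_eq_inner_J)

lemma cinner_add_left: "cinner (x + y) (z::'a::chilbert) = cinner x z + cinner y z"
  by (simp add: complex_eq_iff inner_add_left)
lemma cinner_diff_left: "cinner (x - y) (z::'a::chilbert) = cinner x z - cinner y z"
  by (simp add: complex_eq_iff inner_diff_left)
lemma cinner_scaleC_left: "cinner (scaleC c x) (y::'a::chilbert) = c * cinner x y"
  by (simp add: complex_eq_iff scaleC_eq_Re_Im inner_add_left inner_J_left J_add J_scaleR)
lemma cinner_scaleC_right: "cinner x (scaleC c y::'a::chilbert) = cnj c * cinner x y"
  by (simp add: complex_eq_iff scaleC_eq_Re_Im inner_add_right inner_diff_right inner_J_left J_add J_scaleR)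
lemma cinner_scaleR_left: "cinner (scaleR r x) (y::'a::chilbert) = complex_of_real r * cinner x y"
  by (metis cinner_scaleC_left scaleC_of_real)
lemma cinner_scaleR_right: "cinner x (scaleR r y) = complex_of_real r * cinner x (y::'a::chilbert)"
  by (metis cinner_scaleC_right scaleC_of_real complex_cnj_complex_of_real)
lemma cinner_self: "cinner x (x::'a::chilbert) = complex_of_real ((norm x)^2)"
  by (simp add: complex_eq_iff power2_norm_eq_inner)
lemma cinner_zero_right[simp]: "cinner x (0::'a::chilbert) = 0"
  by (simp add: complex_eq_iff)
lemma cinner_zero_left[simp]: "cinner 0 (x::'a::chilbert) = 0"
  by (simp add: complex_eq_iff)

lemma norm_add_squared_orthogonal:
  assumes "cinner w u = 0"
  shows "(norm (u + w))^2 = (norm u)^2 + (norm (w::'a::chilbert))^2"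
proof -
  have "w \<bullet> u = 0" using assms Re_cinner by (metis zero_complex.sel(1))
  then show ?thesis by (simp add: power2_norm_eq_inner inner_add_left inner_add_right inner_commute)
qed

lemma proj_line_scaleC: "proj_line a (scaleC c z) = scaleC c (proj_line a (z::'a::chilbert))"
  unfolding proj_line_def by (simp add: cinner_scaleC_left scaleC_scaleC)
lemma proj_line_add: "proj_line a (x + y) = proj_line a x + proj_line a (y::'a::chilbert)"
  unfolding proj_line_def by (simp add: cinner_add_left add_divide_distrib scaleC_add_left)
lemma proj_line_diff: "proj_line a (x - y) = proj_line a x - proj_line a (y::'a::chilbert)"
  unfolding proj_line_def by (simp add: cinner_diff_left diff_divide_distrib scaleC_diff_left)
lemma proj_line_zero_right[simp]: "proj_line a 0 = (0::'a::chilbert)"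
  unfolding proj_line_def by simp
lemma proj_line_self[simp]: "proj_line a a = (a::'a::chilbert)"
proof (cases "a = 0")
  case False
  then have "cinner a a / complex_of_real ((norm a)\<^sup>2) = 1"
    by (simp add: cinner_self)
  then show ?thesis unfolding proj_line_def by simp
qed (simp add: proj_line_def)
lemma cinner_proj_line: "cinner (proj_line a z) a = cinner z (a::'a::chilbert)"
proof (cases "a = 0")
  case False
  then show ?thesis unfolding proj_line_def by (simp add: cinner_scaleC_left cinner_self)
qed simp
lemma cinner_proj_line_complement: "cinner (z - proj_line a z) (a::'a::chilbert) = 0"
  by (simp add: cinner_diff_left cinner_proj_line)
lemma proj_line_orthogonal: "cinner w a = 0 \<Longrightarrow> proj_line a w = (0::'a::chilbert)"
  unfolding proj_line_def by simp

lemma norm_squared_proj_line_decomp: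
  "(norm (y::'a::chilbert))^2 = (norm (proj_line a y))^2 + (norm (y - proj_line a y))^2"
proof -
  have "cinner (y - proj_line a y) (proj_line a y) = 0"
    by (subst (2) proj_line_def) (simp add: cinner_scaleC_right cinner_proj_line_complement)
  from norm_add_squared_orthogonal[OF this] show ?thesis by simp
qed

lemma norm_proj_line_le: "norm (proj_line a y) \<le> norm (y::'a::chilbert)"
  using norm_squared_proj_line_decomp[of y a]
  by (metis le_add_same_cancel1 norm_ge_zero power2_le_imp_le zero_le_power2)
lemma norm_proj_line_complement_le: "norm (y - proj_line a y) \<le> norm (y::'a::chilbert)"
  using norm_squared_proj_line_decomp[of y a]
  by (metis le_add_same_cancel2 norm_ge_zero power2_le_imp_le zero_le_power2)

lemma norm_cinner_le: "cmod (cinner y (a::'a::chilbert)) \<le> norm y * norm a"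
proof (cases "a = 0")
  case False
  have "cinner y a = cinner (proj_line a y) a" by (simp add: cinner_proj_line)
  also have "\<dots> = (cinner y a / complex_of_real ((norm a)\<^sup>2)) * complex_of_real ((norm a)\<^sup>2)"
    unfolding proj_line_def by (simp add: cinner_scaleC_left cinner_self)
  finally have "cmod (cinner y a) = norm (proj_line a y) * norm a"
    using False unfolding proj_line_def by (simp add: norm_scaleC norm_divide norm_mult power2_eq_square)
  then show ?thesis using norm_proj_line_le[of a y] by (simp add: mult_right_mono)
qed simp

lemma line_orthogonal_decomposition:
  fixes y a :: "'a::chilbert"
  obtains \<alpha> w where "y = scaleC \<alpha> a + w" "cinner w a = 0"
    "cinner y a = \<alpha> * complex_of_real ((norm a)^2)"
    "(norm y)^2 = (cmod \<alpha>)^2 * (norm a)^2 + (norm w)^2"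
proof
  let ?\<alpha> = "cinner y a / complex_of_real ((norm a)^2)"
  show "y = scaleC ?\<alpha> a + (y - proj_line a y)" by (simp add: proj_line_def)
  show "cinner (y - proj_line a y) a = 0" by (rule cinner_proj_line_complement)
  show "cinner y a = ?\<alpha> * complex_of_real ((norm a)^2)" by (cases "a = 0") simp_all
  show "(norm y)^2 = (cmod ?\<alpha>)^2 * (norm a)^2 + (norm (y - proj_line a y))^2"
    using norm_squared_proj_line_decomp[of y a]
    by (simp add: proj_line_def norm_scaleC power_mult_distrib)
qed

lemma bounded_linear_cinner_left: "bounded_linear (\<lambda>y. cinner y (a::'a::chilbert))"
proof (rule bounded_linear_intro[where K="norm a"])
  show "cinner (x + y) a = cinner x a + cinner y a" for x y by (rule cinner_add_left)
  show "cinner (scaleR r x) a = scaleR r (cinner x a)" for r x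
    by (simp add: cinner_scaleR_left scaleR_conv_of_real)
  show "norm (cinner x a) \<le> norm x * norm a" for x by (rule norm_cinner_le)
qed

lemma bounded_linear_proj_line: "bounded_linear (proj_line (a::'a::chilbert))"
proof (rule bounded_linear_intro[where K=1])
  show "proj_line a (x + y) = proj_line a x + proj_line a y" for x y by (rule proj_line_add)
  show "proj_line a (scaleR r x) = scaleR r (proj_line a x)" for r x
    by (metis proj_line_scaleC scaleC_of_real)
  show "norm (proj_line a x) \<le> norm x * 1" for x using norm_proj_line_le by simp
qed

lemma bounded_bilinear_scaleC: "bounded_bilinear (\<lambda>(c::complex) (x::'a::chilbert). scaleC c x)"
proof
  show "scaleC (a + a') b = scaleC a b + scaleC a' b" for a a' and b::'a by (rule scaleC_add_left)
  show "scaleC a (b + b') = scaleC a b + scaleC a b'" for a and b b'::'a by (rule scaleC_add_right)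
  show "scaleC (scaleR r a) b = scaleR r (scaleC a b)" for r a and b::'a
    by (simp add: scaleR_conv_of_real scaleC_of_real_mult)
  show "scaleC a (scaleR r b) = scaleR r (scaleC a b)" for r a and b::'a by (rule scaleC_scaleR_comm)
  show "\<exists>K. \<forall>a (b::'a). norm (scaleC a b) \<le> norm a * norm b * K"
    by (rule exI[of _ 1]) (simp add: norm_scaleC)
qed

lemma bounded_linear_scaleC_left: "bounded_linear (\<lambda>c. scaleC c (u::'a::chilbert))"
  by (rule bounded_bilinear.bounded_linear_left[OF bounded_bilinear_scaleC])

lemma clinear_functional_compose:
  "clinear_functional L \<Longrightarrow> clinear_map D \<Longrightarrow> clinear_functional (\<lambda>h. L (D h))"
  unfolding clinear_functional_def clinear_map_def
  by (auto intro: bounded_linear_compose)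

lemma clinear_map_compose:
  "clinear_map D1 \<Longrightarrow> clinear_map D2 \<Longrightarrow> clinear_map (\<lambda>h. D1 (D2 h))"
  unfolding clinear_map_def
  by (auto intro: bounded_linear_compose)

section \<open>Moebius automorphisms\<close>

definition mobius_linear :: "'a::chilbert \<Rightarrow> 'a \<Rightarrow> 'a" where
  "mobius_linear a h = proj_line a h + scaleR (sqrt (1 - (norm a)^2)) (h - proj_line a h)"

lemma mobius_eq_mobius_linear:
  "mobius a y = scaleC (1 / (1 - cinner y a)) (a - mobius_linear a (y::'a::chilbert))"
proof -
  define k where "k = 1 / (1 - cinner y a)"
  define s where "s = sqrt (1 - (norm a)^2)"
  define z where "z = scaleC k (a - y)"
  have Pz: "proj_line a z = scaleC k (a - proj_line a y)"
    by (simp add: z_def proj_line_scaleC proj_line_diff)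
  have Qz: "z - proj_line a z = scaleC k (proj_line a y - y)"
    using Pz by (simp add: z_def flip: scaleC_diff_right)
  have "mobius a y = scaleR s (z - proj_line a z) + proj_line a z"
    unfolding mobius_def by (simp add: Let_def z_def k_def s_def)
  also have "\<dots> = scaleC k (scaleR s (proj_line a y - y) + (a - proj_line a y))"
    by (simp only: Qz) (simp add: Pz scaleC_add_right scaleC_scaleR_comm)
  finally show ?thesis by (simp add: k_def s_def mobius_linear_def algebra_simps)
qed

lemma mobius_zero: "mobius a 0 = (a::'a::chilbert)"
  by (simp add: mobius_eq_mobius_linear mobius_linear_def)
lemma mobius_self: "mobius a a = (0::'a::chilbert)"
  by (simp add: mobius_eq_mobius_linear mobius_linear_def)

lemma mobius_scaleC_add_orthogonal:
  assumes w: "cinner w a = 0"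
  shows "mobius a (scaleC \<alpha> a + w) =
    scaleC ((1 - \<alpha>) / (1 - \<alpha> * complex_of_real ((norm a)^2))) a
    + scaleC (- complex_of_real (sqrt (1 - (norm a)^2)) / (1 - \<alpha> * complex_of_real ((norm a)^2))) (w::'a::chilbert)"
proof -
  define d where "d = 1 - \<alpha> * complex_of_real ((norm a)^2)"
  define s where "s = sqrt (1 - (norm a)^2)"
  have ci: "cinner (scaleC \<alpha> a + w) a = \<alpha> * complex_of_real ((norm a)^2)"
    using w by (simp add: cinner_add_left cinner_scaleC_left cinner_self)
  have Py: "proj_line a (scaleC \<alpha> a + w) = scaleC \<alpha> a"
    using w by (simp add: proj_line_add proj_line_scaleC proj_line_orthogonal)
  have "a - mobius_linear a (scaleC \<alpha> a + w) = scaleC (1 - \<alpha>) a + scaleC (- complex_of_real s) w"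
    unfolding mobius_linear_def Py
    by (simp add: s_def scaleC_diff_left scaleC_minus_left scaleC_of_real)
  then have "mobius a (scaleC \<alpha> a + w) = scaleC (1/d) (scaleC (1 - \<alpha>) a + scaleC (- complex_of_real s) w)"
    unfolding mobius_eq_mobius_linear ci by (simp add: d_def)
  then show ?thesis by (simp add: d_def s_def scaleC_add_right scaleC_scaleC)
qed

lemma mobius_denominator_nonzero:
  assumes "norm (a::'a::chilbert) < 1" "norm y < 1"
  shows "1 - cinner y a \<noteq> 0"
proof
  assume "1 - cinner y a = 0"
  then have "cmod (cinner y a) = 1" by simp
  moreover have "norm y * norm a < 1 * 1"
    using assms by (intro mult_strict_mono') auto
  ultimately show False using norm_cinner_le[of y a] by simp
qed

lemma one_minus_norm_mobius_squared:
  assumes a: "norm (a::'a::chilbert) < 1" and d: "1 - cinner y a \<noteq> 0"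
  shows "1 - (norm (mobius a y))^2 = (1 - (norm a)^2) * (1 - (norm y)^2) / (cmod (1 - cinner y a))^2"
proof -
  define n where "n = (norm a)^2"
  obtain \<alpha> w where y: "y = scaleC \<alpha> a + w" and w: "cinner w a = 0"
    and ya: "cinner y a = \<alpha> * complex_of_real n" and ny: "(norm y)^2 = (cmod \<alpha>)^2 * n + (norm w)^2"
    using line_orthogonal_decomposition[of y a] unfolding n_def by metis
  define D where "D = 1 - \<alpha> * complex_of_real n"
  have n: "0 \<le> n" "n < 1" using a by (auto simp: n_def power_less_one_iff abs_less_iff)
  have D: "D \<noteq> 0" using d by (simp add: D_def ya)
  have "(norm (mobius a y))^2
      = (cmod ((1 - \<alpha>) / D))^2 * n + (cmod (- complex_of_real (sqrt (1 - n)) / D))^2 * (norm w)^2"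
    unfolding y mobius_scaleC_add_orthogonal[OF w]
    by (subst norm_add_squared_orthogonal)
      (simp_all add: cinner_scaleC_left cinner_scaleC_right w norm_scaleC power_mult_distrib n_def D_def)
  also have "\<dots> = ((cmod (1 - \<alpha>))^2 * n + (1 - n) * (norm w)^2) / (cmod D)^2"
    using n by (simp add: norm_divide power_divide add_divide_distrib)
  finally have "1 - (norm (mobius a y))^2
      = ((cmod D)^2 - (cmod (1 - \<alpha>))^2 * n - (1 - n) * (norm w)^2) / (cmod D)^2"
    using D by (simp add: field_simps)
  moreover have "(cmod D)^2 - (cmod (1 - \<alpha>))^2 * n - (1 - n) * (norm w)^2
      = (1 - n) * (1 - ((cmod \<alpha>)^2 * n + (norm w)^2))"
    unfolding D_def cmod_power2 by (simp add: power2_eq_square algebra_simps)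
  ultimately show ?thesis by (simp add: ny ya D_def n_def)
qed

lemma norm_mobius_less_1:
  assumes a: "norm (a::'a::chilbert) < 1" and y: "norm y < 1"
  shows "norm (mobius a y) < 1"
proof -
  have d: "1 - cinner y a \<noteq> 0" by (rule mobius_denominator_nonzero[OF a y])
  have "0 < (1 - (norm a)^2) * (1 - (norm y)^2) / (cmod (1 - cinner y a))^2"
    using a y d by (simp add: abs_square_less_1)
  then show ?thesis
    unfolding one_minus_norm_mobius_squared[OF a d, symmetric] by (simp add: abs_square_less_1)
qed

lemma mobius_mobius:
  assumes a: "norm (a::'a::chilbert) < 1" and dy: "1 - cinner y a \<noteq> 0"
  shows "mobius a (mobius a y) = y"
proof -
  define N where "N = complex_of_real ((norm a)^2)"
  define S where "S = complex_of_real (sqrt (1 - (norm a)^2))"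
  obtain \<alpha> w where y: "y = scaleC \<alpha> a + w" and w: "cinner w a = 0"
    and ya: "cinner y a = \<alpha> * N"
    using line_orthogonal_decomposition[of y a] unfolding N_def by metis
  define d where "d = 1 - \<alpha> * N"
  have S2: "S * S = 1 - N"
    using a by (simp add: S_def N_def abs_square_le_1 flip: of_real_mult)
  have N1: "1 - N \<noteq> 0"
    using a by (metis N_def abs_square_less_1 abs_norm_cancel of_real_1 of_real_eq_iff right_minus_eq less_irrefl)
  have d: "d \<noteq> 0" using dy by (simp add: d_def ya)
  define \<alpha>' where "\<alpha>' = (1 - \<alpha>) / d"
  define w' where "w' = scaleC (- S / d) w"
  have w': "cinner w' a = 0" by (simp add: w'_def cinner_scaleC_left w)
  have mob: "mobius a y = scaleC \<alpha>' a + w'"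
    unfolding y mobius_scaleC_add_orthogonal[OF w] by (simp add: d_def \<alpha>'_def w'_def S_def N_def)
  have d': "1 - \<alpha>' * N = (1 - N) / d"
    using d by (simp add: \<alpha>'_def d_def field_simps)
  have "1 - \<alpha>' = \<alpha> * (1 - N) / d"
    using d by (simp add: \<alpha>'_def d_def field_simps)
  then have e1: "(1 - \<alpha>') / (1 - \<alpha>' * N) = \<alpha>"
    unfolding d' using d N1 by simp
  have e2: "(- S / (1 - \<alpha>' * N)) * (- S / d) = 1"
    unfolding d' using d N1 S2 by (simp add: field_simps)
  have "mobius a (mobius a y) = scaleC ((1 - \<alpha>') / (1 - \<alpha>' * N)) a + scaleC (- S / (1 - \<alpha>' * N)) w'"
    unfolding mob mobius_scaleC_add_orthogonal[OF w'] by (simp add: S_def N_def)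
  also have "\<dots> = y"
    unfolding e1 w'_def scaleC_scaleC e2 y by simp
  finally show ?thesis .
qed

lemma bounded_linear_mobius_linear: "bounded_linear (mobius_linear (a::'a::chilbert))"
  unfolding mobius_linear_def
  by (intro bounded_linear_add bounded_linear_const_scaleR bounded_linear_sub
      bounded_linear_proj_line bounded_linear_ident)

lemma mobius_linear_scaleC: "mobius_linear a (scaleC c h) = scaleC c (mobius_linear a (h::'a::chilbert))"
  unfolding mobius_linear_def
  by (simp add: proj_line_scaleC scaleC_add_right scaleC_diff_right scaleC_scaleR_comm)

lemma mobius_linear_self: "mobius_linear a a = (a::'a::chilbert)"
  by (simp add: mobius_linear_def)

lemma norm_mobius_linear_le:
  assumes "norm (a::'a::chilbert) \<le> 1"
  shows "norm (mobius_linear a h) \<le> norm h"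
proof -
  define s where "s = sqrt (1 - (norm a)^2)"
  define p where "p = proj_line a h"
  define q where "q = h - proj_line a h"
  have s2: "s^2 \<le> 1" using assms by (simp add: s_def abs_square_le_1)
  have "cinner (scaleR s q) p = 0"
    unfolding p_def q_def
    by (subst (2) proj_line_def) (simp add: cinner_scaleC_right cinner_scaleR_left cinner_proj_line_complement)
  moreover have "mobius_linear a h = p + scaleR s q" by (simp add: mobius_linear_def s_def p_def q_def)
  ultimately have "(norm (mobius_linear a h))^2 = (norm p)^2 + (norm (scaleR s q))^2"
    by (simp add: norm_add_squared_orthogonal)
  also have "\<dots> = (norm p)^2 + s^2 * (norm q)^2" by (simp add: power_mult_distrib)
  also have "\<dots> \<le> (norm p)^2 + (norm q)^2"
    using s2 by (simp add: mult_left_le_one_le)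
  also have "\<dots> = (norm h)^2" by (simp add: norm_squared_proj_line_decomp[of h a] p_def q_def)
  finally show ?thesis by (rule power2_le_imp_le) simp
qed

definition mobius_deriv :: "'a::chilbert \<Rightarrow> 'a \<Rightarrow> 'a \<Rightarrow> 'a" where
  "mobius_deriv a y h = scaleC (1 / (1 - cinner y a)) (- mobius_linear a h)
     + scaleC (cinner h a / (1 - cinner y a)^2) (a - mobius_linear a y)"

lemma mobius_has_derivative:
  assumes "1 - cinner y a \<noteq> 0"
  shows "(mobius (a::'a::chilbert) has_derivative mobius_deriv a y) (at y)"
proof -
  have g: "((\<lambda>y. 1 - cinner y a) has_derivative (\<lambda>h. 0 - cinner h a)) (at y)"
    by (intro has_derivative_diff has_derivative_const has_derivative_ident
        bounded_linear.has_derivative[OF bounded_linear_cinner_left])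
  have q: "((\<lambda>y. 1 / (1 - cinner y a)) has_derivative
      (\<lambda>h. ((0::complex) * (1 - cinner y a) - 1 * (0 - cinner h a)) / ((1 - cinner y a) * (1 - cinner y a)))) (at y)"
    by (rule has_derivative_divide'[OF has_derivative_const g assms])
  have u: "((\<lambda>y. a - mobius_linear a y) has_derivative (\<lambda>h. 0 - mobius_linear a h)) (at y)"
    by (intro has_derivative_diff has_derivative_const has_derivative_ident
        bounded_linear.has_derivative[OF bounded_linear_mobius_linear])
  have "((\<lambda>y. scaleC (1 / (1 - cinner y a)) (a - mobius_linear a y)) has_derivative
     (\<lambda>h. scaleC (1 / (1 - cinner y a)) (0 - mobius_linear a h) +
          scaleC (((0::complex) * (1 - cinner y a) - 1 * (0 - cinner h a)) / ((1 - cinner y a) * (1 - cinner y a)))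
            (a - mobius_linear a y))) (at y)"
    using bounded_bilinear.FDERIV[OF bounded_bilinear_scaleC q u] by simp
  then show ?thesis
    by (simp add: mobius_eq_mobius_linear[abs_def] mobius_deriv_def[abs_def] power2_eq_square)
qed

lemma clinear_map_mobius_deriv:
  assumes "1 - cinner y a \<noteq> 0"
  shows "clinear_map (mobius_deriv (a::'a::chilbert) y)"
  unfolding clinear_map_def
proof
  show "bounded_linear (mobius_deriv a y)"
    using mobius_has_derivative[OF assms] has_derivative_bounded_linear by blast
  show "\<forall>c h. mobius_deriv a y (scaleC c h) = scaleC c (mobius_deriv a y h)"
    by (simp add: mobius_deriv_def mobius_linear_scaleC cinner_scaleC_left scaleC_add_right
        scaleC_diff_right scaleC_scaleC scaleC_minus_right)
qed

lemma norm_mobius_deriv_self_le: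
  assumes "norm (a::'a::chilbert) < 1"
  shows "norm (mobius_deriv a a h) \<le> norm h / (1 - (norm a)^2)"
proof -
  have p: "1 - (norm a)^2 > 0" using assms by (simp add: abs_square_less_1)
  have e: "mobius_deriv a a h = - scaleC (1 / complex_of_real (1 - (norm a)^2)) (mobius_linear a h)"
    by (simp add: mobius_deriv_def mobius_linear_self cinner_self scaleC_minus_right)
  have "norm (mobius_deriv a a h) = norm (mobius_linear a h) / (1 - (norm a)^2)"
    using p unfolding e norm_minus_cancel norm_scaleC norm_divide
    by (simp del: of_real_diff of_real_power)
  also have "\<dots> \<le> norm h / (1 - (norm a)^2)"
    using norm_mobius_linear_le[of a h] assms p by (simp add: divide_right_mono)
  finally show ?thesis .
qed

lemma mobius_deriv_zero:
  "mobius_deriv a 0 h = - (scaleR (1 - (norm a)^2) (proj_line a h)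
     + scaleR (sqrt (1 - (norm a)^2)) (h - proj_line (a::'a::chilbert) h))"
proof -
  have e: "scaleC (cinner h a) a = scaleR ((norm a)^2) (proj_line a h)"
  proof (cases "a = 0")
    case False
    then show ?thesis
      by (simp add: proj_line_def scaleC_of_real_mult[symmetric] scaleC_scaleC flip: scaleC_of_real)
  qed simp
  have "mobius_deriv a 0 h = scaleC (cinner h a) a - mobius_linear a h"
    by (simp add: mobius_deriv_def mobius_linear_def scaleC_minus_right)
  then show ?thesis using e by (simp add: mobius_linear_def algebra_simps)
qed

section \<open>Analytic maps on the unit ball\<close>

lemma mem_unit_ball: "z \<in> unit_ball \<longleftrightarrow> norm (z::'a::chilbert) < 1"
  by (simp add: unit_ball_def)

lemma fderiv_eqI: "(f has_derivative L) (at x) \<Longrightarrow> fderiv f x = L"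
  unfolding fderiv_def by (rule some_equality) (auto intro: has_derivative_unique)

lemma analytic_fun_fderiv:
  assumes "analytic_fun f" "norm x < 1"
  shows "(f has_derivative fderiv f x) (at x)" "clinear_functional (fderiv f x)"
proof -
  have "x \<in> unit_ball" using assms(2) by (simp add: mem_unit_ball)
  then obtain L where L: "clinear_functional L" "(f has_derivative L) (at x)"
    using assms(1) unfolding analytic_fun_def by blast
  then show "(f has_derivative fderiv f x) (at x)" "clinear_functional (fderiv f x)"
    using fderiv_eqI[OF L(2)] by simp_all
qed

lemma has_field_derivative_complex_line:
  fixes g :: "'a::chilbert \<Rightarrow> complex"
  assumes "(g has_derivative G) (at (b + scaleC t w))" and "\<And>c h. G (scaleC c h) = c * G h"
  shows "((\<lambda>t. g (b + scaleC t w)) has_field_derivative G w) (at t)"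
proof -
  have "((\<lambda>t. b + scaleC t w) has_derivative (\<lambda>h. 0 + scaleC h w)) (at t)"
    by (intro has_derivative_add has_derivative_const
        bounded_linear.has_derivative[OF bounded_linear_scaleC_left has_derivative_ident])
  from has_derivative_compose[OF this assms(1)]
  have "((\<lambda>t. g (b + scaleC t w)) has_derivative (\<lambda>h. G (0 + scaleC h w))) (at t)" .
  moreover have "(\<lambda>h. G (0 + scaleC h w)) = (\<lambda>h. G w * h)"
    using assms(2) by (auto simp: mult.commute)
  ultimately show ?thesis unfolding has_field_derivative_def by simp
qed

lemma analytic_fun_slice_has_field_derivative:
  assumes f: "analytic_fun f" and b: "norm (b + scaleC t w) < 1"
  shows "((\<lambda>t. f (b + scaleC t (w::'a::chilbert))) has_field_derivative fderiv f (b + scaleC t w) w) (at t)"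
proof (rule has_field_derivative_complex_line[OF analytic_fun_fderiv(1)[OF f b]])
  show "fderiv f (b + scaleC t w) (scaleC c h) = c * fderiv f (b + scaleC t w) h" for c h
    using analytic_fun_fderiv(2)[OF f b] by (simp add: clinear_functional_def)
qed

definition self_map_deriv :: "('a::chilbert \<Rightarrow> 'a) \<Rightarrow> 'a \<Rightarrow> 'a \<Rightarrow> 'a" where
  "self_map_deriv \<phi> z = (SOME L. clinear_map L \<and> (\<phi> has_derivative L) (at z))"

lemma analytic_self_mapD:
  assumes \<phi>: "analytic_self_map \<phi>" and z: "norm (z::'a::chilbert) < 1"
  shows "norm (\<phi> z) < 1" "clinear_map (self_map_deriv \<phi> z)" "(\<phi> has_derivative self_map_deriv \<phi> z) (at z)"
proof -
  have zi: "z \<in> unit_ball" using z by (simp add: mem_unit_ball)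
  then show "norm (\<phi> z) < 1" using \<phi> unfolding analytic_self_map_def mem_unit_ball[symmetric] by blast
  have "\<exists>L. clinear_map L \<and> (\<phi> has_derivative L) (at z)"
    using \<phi> zi unfolding analytic_self_map_def by blast
  from someI_ex[OF this] show "clinear_map (self_map_deriv \<phi> z)" "(\<phi> has_derivative self_map_deriv \<phi> z) (at z)"
    unfolding self_map_deriv_def by auto
qed

lemma schwarz_lemma_functional_unit:
  fixes \<psi> :: "'a::chilbert \<Rightarrow> 'a"
  assumes \<psi>: "analytic_self_map \<psi>" and "\<psi> 0 = 0"
    and L: "clinear_functional L" and B: "0 < onorm L" and u: "norm u = 1"
  shows "cmod (L (self_map_deriv \<psi> 0 u)) \<le> onorm L"
proof -
  define D where "D = self_map_deriv \<psi>"
  note ball = analytic_self_mapD(1)[OF \<psi>] and lin = analytic_self_mapD(2)[OF \<psi>, folded D_def]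
    and der = analytic_self_mapD(3)[OF \<psi>, folded D_def]
  have blL: "bounded_linear L" and LC: "\<And>c x. L (scaleC c x) = c * L x"
    using L by (auto simp: clinear_functional_def)
  define g where "g = (\<lambda>z. L (\<psi> z) / onorm L)"
  define k where "k = (\<lambda>t. g (0 + scaleC t u))"
  have g_der: "(g has_derivative (\<lambda>h. L (D z h) / onorm L)) (at z)" if "norm z < 1" for z
    unfolding g_def
    using bounded_linear.has_derivative[OF bounded_linear_divide bounded_linear.has_derivative[OF blL der[OF that]]]
    by simp
  have inb: "norm (0 + scaleC t u) < 1" if "norm t < 1" for t
    using that u by (simp add: norm_scaleC)
  have kder: "(k has_field_derivative (L (D (0 + scaleC t u) u) / onorm L)) (at t)"
    if "norm t < 1" for t
    unfolding k_def using g_der[OF inb[OF that]] lin[OF inb[OF that]]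
    by (intro has_field_derivative_complex_line) (simp_all add: clinear_map_def LC)
  have "k holomorphic_on ball 0 1"
    unfolding holomorphic_on_def field_differentiable_def
    using kder has_field_derivative_at_within by (metis mem_ball_0)
  moreover have "k 0 = 0" using blL \<open>\<psi> 0 = 0\<close> by (simp add: k_def g_def linear_simps)
  moreover have "norm (k z) < 1" if "norm z < 1" for z
  proof -
    have "cmod (L (\<psi> (0 + scaleC z u))) \<le> onorm L * norm (\<psi> (0 + scaleC z u))"
      by (rule onorm[OF blL])
    also have "\<dots> < onorm L" using ball[OF inb[OF that]] B by simp
    finally show ?thesis using B by (simp add: k_def g_def norm_divide)
  qed
  ultimately have "norm (deriv k 0) \<le> 1"
    using Schwarz_Lemma(2)[of k 0] by simp
  moreover have "deriv k 0 = L (D 0 u) / onorm L"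
    using DERIV_imp_deriv[OF kder[of 0]] by simp
  ultimately show ?thesis using B by (simp add: D_def norm_divide)
qed

lemma schwarz_lemma_functional:
  fixes \<psi> :: "'a::chilbert \<Rightarrow> 'a"
  assumes \<psi>: "analytic_self_map \<psi>" and p0: "\<psi> 0 = 0" and L: "clinear_functional L"
  shows "onorm (\<lambda>h. L (self_map_deriv \<psi> 0 h)) \<le> onorm L"
proof (rule onorm_bound)
  define D where "D = self_map_deriv \<psi>"
  have blL: "bounded_linear L" and LC: "\<And>c x. L (scaleC c x) = c * L x"
    using L by (auto simp: clinear_functional_def)
  have blD: "bounded_linear (D 0)" and DC: "\<And>c x. D 0 (scaleC c x) = scaleC c (D 0 x)"
    using analytic_self_mapD(2)[OF \<psi>, of 0] by (auto simp: D_def clinear_map_def)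
  show "0 \<le> onorm L" by (rule onorm_pos_le[OF blL])
  fix v
  show "cmod (L (self_map_deriv \<psi> 0 v)) \<le> onorm L * norm v"
  proof (cases "v = 0 \<or> onorm L = 0")
    case True
    then show ?thesis using onorm[OF blL, of "D 0 v"] blD blL by (auto simp: D_def linear_simps)
  next
    case False
    then have "v \<noteq> 0" "0 < onorm L" using onorm_pos_le[OF blL] by auto
    define u where "u = scaleR (1 / norm v) v"
    have "norm u = 1" using \<open>v \<noteq> 0\<close> by (simp add: u_def)
    have "L (D 0 v) = complex_of_real (norm v) * L (D 0 u)"
    proof -
      have "v = scaleC (complex_of_real (norm v)) u" using \<open>v \<noteq> 0\<close> by (simp add: u_def scaleC_of_real)
      then show ?thesis by (metis DC LC)
    qed
    moreover have "cmod (L (D 0 u)) \<le> onorm L"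
      unfolding D_def by (rule schwarz_lemma_functional_unit[OF \<psi> p0 L \<open>0 < onorm L\<close> \<open>norm u = 1\<close>])
    ultimately show ?thesis
      by (simp add: D_def norm_mult) (metis mult.commute mult_left_mono norm_ge_zero)
  qed
qed

lemma fderiv_comp_mobius_zero:
  assumes f: "analytic_fun f" and a: "norm (a::'a::chilbert) < 1"
  shows "((f \<circ> mobius a) has_derivative (\<lambda>h. fderiv f a (mobius_deriv a 0 h))) (at 0)"
    and "fderiv (f \<circ> mobius a) 0 = (\<lambda>h. fderiv f a (mobius_deriv a 0 h))"
proof -
  have m: "(mobius a has_derivative mobius_deriv a 0) (at 0)" by (rule mobius_has_derivative) simp
  have "(f has_derivative fderiv f (mobius a 0)) (at (mobius a 0))"
    using analytic_fun_fderiv(1)[OF f] a by (simp add: mobius_zero)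
  from has_derivative_compose[OF m this]
  show d: "((f \<circ> mobius a) has_derivative (\<lambda>h. fderiv f a (mobius_deriv a 0 h))) (at 0)"
    by (simp add: mobius_zero o_def)
  show "fderiv (f \<circ> mobius a) 0 = (\<lambda>h. fderiv f a (mobius_deriv a 0 h))"
    by (rule fderiv_eqI[OF d])
qed

section \<open>Comparing the Bloch seminorm with the invariant seminorm\<close>

lemma norm_squared_scaleR_add_scaleC_orthogonal:
  assumes "cinner w a = 0"
  shows "(norm (scaleR c a + scaleC t w))^2 = c^2 * (norm a)^2 + (cmod t)^2 * (norm (w::'a::chilbert))^2"
proof -
  have "cinner (scaleC t w) (scaleR c a) = 0"
    using assms by (simp add: cinner_scaleC_left cinner_scaleR_right)
  from norm_add_squared_orthogonal[OF this] show ?thesis by (simp add: norm_scaleC power_mult_distrib)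
qed

lemma radial_point_exists:
  assumes "norm (a::'a::chilbert) < 1" "1 - (norm a)^2 < 1/4"
  obtains l where "0 \<le> l" "l \<le> 1" "1 - (norm (scaleR l a))^2 = 4 * (1 - (norm a)^2)"
proof
  define l where "l = sqrt (1 - 4 * (1 - (norm a)^2)) / norm a"
  have q: "0 \<le> 1 - 4 * (1 - (norm a)^2)" using assms by simp
  have na: "norm a > 0" using assms by (cases "a = 0") auto
  show "0 \<le> l" unfolding l_def using q by simp
  have "(l * norm a)^2 = 1 - 4 * (1 - (norm a)^2)"
    using na q by (simp add: l_def)
  then show "1 - (norm (scaleR l a))^2 = 4 * (1 - (norm a)^2)"
    using \<open>0 \<le> l\<close> by (simp add: power_mult_distrib)
  have "sqrt (1 - 4 * (1 - (norm a)^2)) \<le> sqrt ((norm a)^2)"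
    using assms by (intro real_sqrt_le_mono) (simp add: algebra_simps abs_square_le_1)
  then show "l \<le> 1" using na by (simp add: l_def)
qed

lemma radial_gap_le:
  fixes a :: "'a::chilbert"
  assumes s: "1 - (norm a)^2 < 1/4" and l: "0 \<le> l" "l \<le> 1"
    and depth: "1 - (norm (scaleR l a))^2 = 4 * (1 - (norm a)^2)"
  shows "norm (a - scaleR l a) \<le> 6 * (1 - (norm a)^2)"
proof -
  define r where "r = norm a"
  have r: "r > 1/2"
  proof (rule ccontr)
    assume "\<not> r > 1/2"
    then have "r^2 \<le> (1/2)^2" by (intro power_mono) (auto simp: r_def)
    then show False using s by (simp add: r_def power_divide)
  qed
  have lr: "0 \<le> l * r" "l * r \<le> r" using l by (simp_all add: r_def mult_left_le_one_le)
  have "a - scaleR l a = scaleR (1 - l) a" by (simp add: algebra_simps)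
  then have "norm (a - scaleR l a) = r - l * r"
    using l by (simp add: r_def left_diff_distrib)
  also have "\<dots> \<le> 2 * ((r - l * r) * (r + l * r))"
    using mult_left_mono[of "1/2" "r + l * r" "r - l * r"] r lr by simp
  also have "(r - l * r) * (r + l * r) = 3 * (1 - r^2)"
    using depth l by (simp add: r_def power_mult_distrib algebra_simps power2_eq_square)
  finally show ?thesis by (simp add: r_def)
qed

locale bloch_bounded =
  fixes f :: "'a::chilbert \<Rightarrow> complex" and M :: real
  assumes analytic: "analytic_fun f"
    and weighted_onorm_fderiv_le: "\<And>x. norm x < 1 \<Longrightarrow> (1 - (norm x)^2) * onorm (fderiv f x) \<le> M"
begin

lemma bounded_linear_fderiv: "norm x < 1 \<Longrightarrow> bounded_linear (fderiv f x)"
  using analytic_fun_fderiv(2)[OF analytic] by (simp add: clinear_functional_def)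

lemma bound_nonneg: "0 \<le> M"
  using weighted_onorm_fderiv_le[of 0] onorm_pos_le[OF bounded_linear_fderiv, of 0] by simp

lemma onorm_fderiv_le:
  assumes "norm x < 1"
  shows "onorm (fderiv f x) \<le> M / (1 - (norm x)^2)"
  using weighted_onorm_fderiv_le[OF assms] assms by (simp add: abs_square_less_1 field_simps)

lemma norm_fderiv_le:
  assumes "norm x < 1"
  shows "cmod (fderiv f x h) \<le> M / (1 - (norm x)^2) * norm h"
  using onorm[OF bounded_linear_fderiv[OF assms], of h] onorm_fderiv_le[OF assms]
  by (meson mult_right_mono norm_ge_zero order_trans)

lemma norm_diff_le_segment:
  assumes seg: "\<And>p. p \<in> closed_segment x y \<Longrightarrow> norm p < 1 \<and> \<delta> \<le> 1 - (norm p)^2" and "0 < \<delta>"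
  shows "cmod (f y - f x) \<le> M / \<delta> * norm (y - x)"
proof -
  have "(f has_derivative fderiv f p) (at p within closed_segment x y)" if "p \<in> closed_segment x y" for p
    using analytic_fun_fderiv(1)[OF analytic] seg[OF that] by (simp add: has_derivative_at_withinI)
  moreover have "onorm (fderiv f p) \<le> M / \<delta>" if "p \<in> closed_segment x y" for p
  proof -
    have "onorm (fderiv f p) \<le> M / (1 - (norm p)^2)" using onorm_fderiv_le seg[OF that] by blast
    also have "\<dots> \<le> M / \<delta>"
      using seg[OF that] \<open>0 < \<delta>\<close> bound_nonneg by (intro divide_left_mono) auto
    finally show ?thesis .
  qed
  ultimately show ?thesis
    using differentiable_bound[of "closed_segment x y" f "fderiv f" "M / \<delta>" y x] by simp
qed

text \<open>Far from the sphere the trivial bound suffices; 32 M (rather than 2 M) is what the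
  induction in \<open>tangential_deriv_bound_depth\<close> propagates.\<close>

lemma shallow_deriv_bound:
  assumes a: "norm a < 1" and s: "1/4 \<le> 1 - (norm a)^2" and w: "norm w = 1"
  shows "cmod (fderiv f a w) * sqrt (1 - (norm a)^2) \<le> 32 * M"
proof -
  define s where "s = sqrt (1 - (norm a)^2)"
  have s2: "s^2 = 1 - (norm a)^2" using a by (simp add: s_def abs_square_le_1)
  have sh: "1/2 \<le> s" unfolding s_def using s by (intro real_le_rsqrt) (simp add: power_divide)
  have "cmod (fderiv f a w) * s \<le> M / s^2 * s"
    using norm_fderiv_le[OF a, of w] w s2 sh by (intro mult_right_mono) auto
  also have "\<dots> = M / s" using sh by (simp add: power2_eq_square)
  also have "\<dots> \<le> 2 * M"
    using mult_left_mono[of 1 "2 * s" M] sh bound_nonneg by (simp add: divide_le_eq)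
  finally show ?thesis using bound_nonneg by (simp add: s_def)
qed

lemma radial_diff_bound_on_circle:
  assumes a: "norm a < 1" and s4: "1 - (norm a)^2 < 1/4" and w: "norm w = 1" "cinner w a = 0"
    and l: "0 \<le> l" "l \<le> 1" "1 - (norm (scaleR l a))^2 = 4 * (1 - (norm a)^2)"
    and t: "cmod t = sqrt (1 - (norm a)^2) / 2"
  shows "cmod (f (a + scaleC t w) - f (scaleR l a + scaleC t w)) \<le> 8 * M"
proof -
  define s where "s = sqrt (1 - (norm a)^2)"
  have s2: "s^2 = 1 - (norm a)^2" using a by (simp add: s_def abs_square_le_1)
  have spos: "0 < s" using a by (simp add: s_def abs_square_less_1)
  have "cmod (f (a + scaleC t w) - f (scaleR l a + scaleC t w))
      \<le> M / (3/4 * s^2) * norm ((a + scaleC t w) - (scaleR l a + scaleC t w))"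
  proof (rule norm_diff_le_segment)
    fix p assume "p \<in> closed_segment (scaleR l a + scaleC t w) (a + scaleC t w)"
    then obtain u where u: "0 \<le> u" "u \<le> 1"
      and p: "p = scaleR ((1 - u) * l + u) a + scaleC t w"
      unfolding in_segment by (auto simp: algebra_simps)
    have "0 \<le> (1 - u) * l" "(1 - u) * l \<le> 1 - u" using u l by (simp_all add: mult_left_le)
    then have "0 \<le> (1 - u) * l + u" "(1 - u) * l + u \<le> 1" using u by simp_all
    then have c: "((1 - u) * l + u)^2 \<le> 1" by (simp add: abs_square_le_1)
    have "cmod t = s / 2" using t by (simp add: s_def)
    then have "(cmod t)^2 = s^2 / 4" by (subst \<open>cmod t = s / 2\<close>) (simp add: power_divide)
    with c have "(norm p)^2 \<le> (norm a)^2 + s^2 / 4"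
      using p w mult_left_le_one_le[of "(norm a)^2" "((1 - u) * l + u)^2"]
      by (simp add: norm_squared_scaleR_add_scaleC_orthogonal)
    then have "(norm p)^2 < 1" "3/4 * s^2 \<le> 1 - (norm p)^2"
      using s2 a abs_square_less_1[of "norm a"] by (simp_all add: field_simps)
    then show "norm p < 1 \<and> 3/4 * s^2 \<le> 1 - (norm p)^2" by (simp add: abs_square_less_1)
  qed (use spos in simp)
  also have "\<dots> \<le> M / (3/4 * s^2) * (6 * s^2)"
  proof (rule mult_left_mono)
    show "norm ((a + scaleC t w) - (scaleR l a + scaleC t w)) \<le> 6 * s^2"
      using radial_gap_le[OF s4 l] s2 by simp
    show "0 \<le> M / (3/4 * s^2)" using bound_nonneg spos by simp
  qed
  also have "\<dots> = 8 * M" using spos by simp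
  finally show ?thesis .
qed

lemma radial_diff_deriv_bound:
  assumes a: "norm a < 1" and s4: "1 - (norm a)^2 < 1/4" and w: "norm w = 1" "cinner w a = 0"
    and l: "0 \<le> l" "l \<le> 1" "1 - (norm (scaleR l a))^2 = 4 * (1 - (norm a)^2)"
  shows "cmod (fderiv f a w - fderiv f (scaleR l a) w) \<le> 16 * M / sqrt (1 - (norm a)^2)"
proof -
  define s where "s = sqrt (1 - (norm a)^2)"
  have s2: "s^2 = 1 - (norm a)^2" using a by (simp add: s_def abs_square_le_1)
  have spos: "0 < s" using a by (simp add: s_def abs_square_less_1)
  define g where "g = (\<lambda>t. f (a + scaleC t w) - f (scaleR l a + scaleC t w))"
  have inball: "norm (scaleR c a + scaleC t w) < 1" if "cmod t < s" "\<bar>c\<bar> \<le> 1" for c t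
  proof -
    have "c^2 * (norm a)^2 \<le> (norm a)^2"
      using that(2) by (simp add: abs_square_le_1 mult_left_le_one_le)
    moreover have "(cmod t)^2 < s^2" using that(1) by (simp add: power_strict_mono)
    ultimately have "(norm (scaleR c a + scaleC t w))^2 < 1"
      using w s2 by (simp add: norm_squared_scaleR_add_scaleC_orthogonal)
    then show ?thesis by (simp add: abs_square_less_1)
  qed
  have gder: "(g has_field_derivative (fderiv f (a + scaleC t w) w - fderiv f (scaleR l a + scaleC t w) w)) (at t)"
    if "cmod t < s" for t
    unfolding g_def using inball[OF that, of 1] inball[OF that, of l] l
    by (intro DERIV_diff analytic_fun_slice_has_field_derivative[OF analytic]) simp_all
  have hol: "g holomorphic_on ball 0 s"
    unfolding holomorphic_on_def field_differentiable_def
    using gder has_field_derivative_at_within by (metis mem_ball_0)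
  have "norm ((deriv ^^ 1) g 0) \<le> fact 1 * (8 * M) / (s / 2) ^ 1"
  proof (rule Cauchy_inequality)
    show "g holomorphic_on ball 0 (s / 2)" by (rule holomorphic_on_subset[OF hol]) (use spos in auto)
    show "continuous_on (cball 0 (s / 2)) g"
      by (rule continuous_on_subset[OF holomorphic_on_imp_continuous_on[OF hol]]) (use spos in auto)
    show "norm (g t) \<le> 8 * M" if "norm (0 - t) = s / 2" for t
      unfolding g_def using that by (intro radial_diff_bound_on_circle[OF a s4 w l]) (simp add: s_def)
  qed (use spos in simp)
  moreover have "(deriv ^^ 1) g 0 = fderiv f a w - fderiv f (scaleR l a) w"
    using DERIV_imp_deriv[OF gder[of 0]] spos by simp
  ultimately show ?thesis by (simp add: s_def)
qed

lemma tangential_deriv_bound_depth: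
  "norm a < 1 \<Longrightarrow> (1/4)^k \<le> 1 - (norm a)^2 \<Longrightarrow> norm w = 1 \<Longrightarrow> cinner w a = 0 \<Longrightarrow>
    cmod (fderiv f a w) * sqrt (1 - (norm a)^2) \<le> 32 * M"
proof (induction k arbitrary: a)
  case 0
  then show ?case by (intro shallow_deriv_bound) simp_all
next
  case (Suc k)
  show ?case
  proof (cases "1/4 \<le> 1 - (norm a)^2")
    case True
    then show ?thesis using shallow_deriv_bound Suc.prems by blast
  next
    case False
    then have s4: "1 - (norm a)^2 < 1/4" by simp
    define s where "s = sqrt (1 - (norm a)^2)"
    have s2: "s^2 = 1 - (norm a)^2" and spos: "0 < s"
      using Suc.prems(1) by (simp_all add: s_def abs_square_le_1 abs_square_less_1)
    obtain l where l: "0 \<le> l" "l \<le> 1" "1 - (norm (scaleR l a))^2 = 4 * (1 - (norm a)^2)"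
      using radial_point_exists[OF Suc.prems(1) s4] by blast
    have "0 < 1 - (norm a)^2" using Suc.prems(1) by (simp add: abs_square_less_1)
    then have "(norm (scaleR l a))^2 < 1" using l(3) by (simp add: field_simps)
    then have "norm (scaleR l a) < 1" by (metis abs_norm_cancel abs_square_less_1)
    moreover have "(1/4)^k \<le> 1 - (norm (scaleR l a))^2" using Suc.prems(2) l(3) by simp
    moreover have "cinner w (scaleR l a) = 0" using Suc.prems(4) by (simp add: cinner_scaleR_right)
    ultimately have "cmod (fderiv f (scaleR l a) w) * sqrt (1 - (norm (scaleR l a))^2) \<le> 32 * M"
      using Suc.IH Suc.prems(3) by blast
    moreover have "sqrt (1 - (norm (scaleR l a))^2) = 2 * s"
      unfolding l(3) s_def real_sqrt_mult by simp
    ultimately have "cmod (fderiv f (scaleR l a) w) \<le> 16 * M / s"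
      using spos by (simp add: field_simps)
    moreover have "cmod (fderiv f a w - fderiv f (scaleR l a) w) \<le> 16 * M / s"
      using radial_diff_deriv_bound[OF Suc.prems(1) s4 Suc.prems(3,4) l] by (simp add: s_def)
    ultimately have "cmod (fderiv f a w) \<le> 32 * M / s"
      using norm_triangle_sub[of "fderiv f a w" "fderiv f (scaleR l a) w"] by simp
    then show ?thesis using spos by (simp add: s_def field_simps)
  qed
qed

lemma tangential_deriv_bound:
  assumes a: "norm a < 1" and wa: "cinner w a = 0"
  shows "cmod (fderiv f a w) * sqrt (1 - (norm a)^2) \<le> 32 * M * norm w"
proof (cases "w = 0")
  case True
  then show ?thesis using bounded_linear_fderiv[OF a] by (simp add: linear_simps)
next
  case False
  have "0 < 1 - (norm a)^2" using a by (simp add: abs_square_less_1)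
  then obtain k where k: "(1/4::real)^k < 1 - (norm a)^2" using real_arch_pow_inv by force
  define u where "u = scaleR (1 / norm w) w"
  have "norm u = 1" "cinner u a = 0" using False wa by (simp_all add: u_def cinner_scaleR_left)
  then have bu: "cmod (fderiv f a u) * sqrt (1 - (norm a)^2) \<le> 32 * M"
    using tangential_deriv_bound_depth[of a k u] a k by simp
  have "fderiv f a w = scaleR (norm w) (fderiv f a u)"
    using False bounded_linear_fderiv[OF a] by (simp add: u_def linear_simps)
  then show ?thesis using mult_left_mono[OF bu norm_ge_zero[of w]] by (simp add: algebra_simps)
qed

lemma onorm_fderiv_comp_mobius_le:
  assumes a: "norm a < 1"
  shows "onorm (fderiv (f \<circ> mobius a) 0) \<le> 33 * M"
  unfolding fderiv_comp_mobius_zero(2)[OF analytic a]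
proof (rule onorm_bound)
  show "0 \<le> 33 * M" using bound_nonneg by simp
next
  fix h
  define s where "s = sqrt (1 - (norm a)^2)"
  define p where "p = proj_line a h"
  define q where "q = h - proj_line a h"
  have pos: "0 < 1 - (norm a)^2" using a by (simp add: abs_square_less_1)
  have "fderiv f a (mobius_deriv a 0 h) = - (scaleR (1 - (norm a)^2) (fderiv f a p) + scaleR s (fderiv f a q))"
    unfolding mobius_deriv_zero using bounded_linear_fderiv[OF a] by (simp add: linear_simps s_def p_def q_def)
  then have "cmod (fderiv f a (mobius_deriv a 0 h))
      = cmod (scaleR (1 - (norm a)^2) (fderiv f a p) + scaleR s (fderiv f a q))"
    by (simp only: norm_minus_cancel)
  also have "\<dots> \<le> (1 - (norm a)^2) * cmod (fderiv f a p) + s * cmod (fderiv f a q)"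
    using pos norm_triangle_ineq[of "scaleR (1 - (norm a)^2) (fderiv f a p)" "scaleR s (fderiv f a q)"]
    by (simp add: s_def)
  also have "(1 - (norm a)^2) * cmod (fderiv f a p) \<le> M * norm h"
  proof -
    have "(1 - (norm a)^2) * cmod (fderiv f a p) \<le> M * norm p"
      using norm_fderiv_le[OF a, of p] pos by (simp add: field_simps)
    also have "\<dots> \<le> M * norm h" using bound_nonneg norm_proj_line_le[of a h] by (simp add: p_def mult_left_mono)
    finally show ?thesis .
  qed
  also have "s * cmod (fderiv f a q) \<le> 32 * M * norm h"
  proof -
    have "s * cmod (fderiv f a q) \<le> 32 * M * norm q"
      using tangential_deriv_bound[OF a, of q] by (simp add: q_def cinner_proj_line_complement s_def mult.commute)
    also have "\<dots> \<le> 32 * M * norm h"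
      using bound_nonneg norm_proj_line_complement_le[of h a] by (simp add: q_def mult_left_mono)
    finally show ?thesis .
  qed
  finally show "cmod (fderiv f a (mobius_deriv a 0 h)) \<le> 33 * M * norm h" by simp
qed

end

lemma weighted_onorm_fderiv_le_comp_mobius:
  assumes g: "analytic_fun g" and x: "norm (x::'a::chilbert) < 1"
  shows "(1 - (norm x)^2) * onorm (fderiv g x) \<le> onorm (fderiv (g \<circ> mobius x) 0)"
proof -
  define G where "G = g \<circ> mobius x"
  have p: "1 - (norm x)^2 > 0" using x by (simp add: abs_square_less_1)
  have "(G has_derivative fderiv G 0) (at 0)"
    using fderiv_comp_mobius_zero[OF g x] unfolding G_def by simp
  then have blG: "bounded_linear (fderiv G 0)" and Gd: "(G has_derivative fderiv G 0) (at (mobius x x))"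
    by (simp_all add: has_derivative_bounded_linear mobius_self)
  have c: "((\<lambda>z. G (mobius x z)) has_derivative (\<lambda>h. fderiv G 0 (mobius_deriv x x h))) (at x)"
    using mobius_has_derivative[OF mobius_denominator_nonzero[OF x x]] Gd by (rule has_derivative_compose)
  have eq: "G (mobius x z) = g z" if "z \<in> unit_ball" for z
    using mobius_mobius[OF x mobius_denominator_nonzero[OF x]] that by (simp add: G_def mem_unit_ball)
  have "(g has_derivative (\<lambda>h. fderiv G 0 (mobius_deriv x x h))) (at x)"
    by (rule has_derivative_transform_within_open[where s=unit_ball, OF c _ _ eq]) (use x in \<open>simp_all add: unit_ball_def\<close>)
  then have gd: "fderiv g x = (\<lambda>h. fderiv G 0 (mobius_deriv x x h))" by (rule fderiv_eqI)
  have "onorm (fderiv g x) \<le> onorm (fderiv G 0) / (1 - (norm x)^2)"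
  proof (rule onorm_bound)
    show "0 \<le> onorm (fderiv G 0) / (1 - (norm x)^2)" using onorm_pos_le[OF blG] p by simp
    fix h
    have "cmod (fderiv g x h) \<le> onorm (fderiv G 0) * norm (mobius_deriv x x h)"
      unfolding gd by (rule onorm[OF blG])
    also have "\<dots> \<le> onorm (fderiv G 0) * (norm h / (1 - (norm x)^2))"
      using norm_mobius_deriv_self_le[OF x, of h] onorm_pos_le[OF blG] by (intro mult_left_mono) auto
    finally show "cmod (fderiv g x h) \<le> onorm (fderiv G 0) / (1 - (norm x)^2) * norm h" by simp
  qed
  then show ?thesis using p by (simp add: G_def field_simps)
qed

section \<open>Composition with an analytic self-map\<close>

lemma analytic_fun_comp_self_map:
  assumes f: "analytic_fun f" and \<phi>: "analytic_self_map \<phi>"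
  shows "analytic_fun (f \<circ> \<phi>)"
  unfolding analytic_fun_def
proof
  fix x :: 'a assume "x \<in> unit_ball"
  then have x: "norm x < 1" by (simp add: mem_unit_ball)
  note fd = analytic_fun_fderiv[OF f analytic_self_mapD(1)[OF \<phi> x]]
  show "\<exists>L. clinear_functional L \<and> ((f \<circ> \<phi>) has_derivative L) (at x)"
    using has_derivative_compose[OF analytic_self_mapD(3)[OF \<phi> x] fd(1)]
      clinear_functional_compose[OF fd(2) analytic_self_mapD(2)[OF \<phi> x]]
    by (auto simp: o_def)
qed

lemma analytic_self_map_mobius_comp:
  assumes \<phi>: "analytic_self_map \<phi>" and a: "norm (a::'a::chilbert) < 1" and b: "norm b < 1"
  shows "analytic_self_map (\<lambda>z. mobius b (\<phi> (mobius a z)))"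
  unfolding analytic_self_map_def mem_unit_ball
proof (intro conjI ballI subsetI)
  have in_ball: "norm (mobius a z) < 1" "norm (\<phi> (mobius a z)) < 1" if "norm z < 1" for z
    using norm_mobius_less_1[OF a that] analytic_self_mapD(1)[OF \<phi>] by auto
  note denom = mobius_denominator_nonzero
  show "y \<in> unit_ball" if "y \<in> (\<lambda>z. mobius b (\<phi> (mobius a z))) ` unit_ball" for y
    using that norm_mobius_less_1[OF b in_ball(2)] by (auto simp: mem_unit_ball)
  fix z :: 'a assume "z \<in> unit_ball"
  then have z: "norm z < 1" by (simp add: mem_unit_ball)
  show "\<exists>L. clinear_map L \<and> ((\<lambda>z. mobius b (\<phi> (mobius a z))) has_derivative L) (at z)"
  proof (intro exI conjI)
    show "((\<lambda>z. mobius b (\<phi> (mobius a z))) has_derivative (\<lambda>h. mobius_deriv b (\<phi> (mobius a z))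
        (self_map_deriv \<phi> (mobius a z) (mobius_deriv a z h)))) (at z)"
      by (intro has_derivative_compose[OF has_derivative_compose[OF
          mobius_has_derivative[OF denom[OF a z]] analytic_self_mapD(3)[OF \<phi> in_ball(1)[OF z]]]
          mobius_has_derivative[OF denom[OF b in_ball(2)[OF z]]]])
    show "clinear_map (\<lambda>h. mobius_deriv b (\<phi> (mobius a z)) (self_map_deriv \<phi> (mobius a z) (mobius_deriv a z h)))"
      by (intro clinear_map_compose[OF clinear_map_mobius_deriv[OF denom[OF b in_ball(2)[OF z]]]
          clinear_map_compose[OF analytic_self_mapD(2)[OF \<phi> in_ball(1)[OF z]]
          clinear_map_mobius_deriv[OF denom[OF a z]]]])
  qed
qed

lemma onorm_fderiv_comp_self_map_mobius_le:
  assumes f: "analytic_fun f" and \<phi>: "analytic_self_map \<phi>" and x: "norm (x::'a::chilbert) < 1"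
  shows "onorm (fderiv ((f \<circ> \<phi>) \<circ> mobius x) 0) \<le> onorm (fderiv (f \<circ> mobius (\<phi> x)) 0)"
proof -
  define b where "b = \<phi> x"
  have b: "norm b < 1" using analytic_self_mapD(1)[OF \<phi> x] by (simp add: b_def)
  define \<psi> where "\<psi> = (\<lambda>z. mobius b (\<phi> (mobius x z)))"
  have \<psi>: "analytic_self_map \<psi>" unfolding \<psi>_def by (rule analytic_self_map_mobius_comp[OF \<phi> x b])
  have p0: "\<psi> 0 = 0" by (simp add: \<psi>_def b_def mobius_zero mobius_self)
  define L where "L = fderiv (f \<circ> mobius b) 0"
  have L: "clinear_functional L"
    unfolding L_def fderiv_comp_mobius_zero(2)[OF f b]
    by (intro clinear_functional_compose[OF analytic_fun_fderiv(2)[OF f b]] clinear_map_mobius_deriv) simp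
  have "((f \<circ> mobius b) has_derivative L) (at (\<psi> 0))"
    using fderiv_comp_mobius_zero[OF f b] p0 by (simp add: L_def)
  from has_derivative_compose[OF analytic_self_mapD(3)[OF \<psi>, of 0] this]
  have c: "((\<lambda>z. (f \<circ> mobius b) (\<psi> z)) has_derivative (\<lambda>h. L (self_map_deriv \<psi> 0 h))) (at 0)"
    by simp
  have eq: "(f \<circ> mobius b) (\<psi> z) = ((f \<circ> \<phi>) \<circ> mobius x) z" if "z \<in> unit_ball" for z
    using that mobius_mobius[OF b mobius_denominator_nonzero[OF b]] norm_mobius_less_1[OF x]
      analytic_self_mapD(1)[OF \<phi>] by (simp add: \<psi>_def mem_unit_ball)
  have "(((f \<circ> \<phi>) \<circ> mobius x) has_derivative (\<lambda>h. L (self_map_deriv \<psi> 0 h))) (at 0)"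
    by (rule has_derivative_transform_within_open[where s=unit_ball, OF c _ _ eq]) (simp_all add: unit_ball_def)
  then have "fderiv ((f \<circ> \<phi>) \<circ> mobius x) 0 = (\<lambda>h. L (self_map_deriv \<psi> 0 h))" by (rule fderiv_eqI)
  with schwarz_lemma_functional[OF \<psi> p0 L] show ?thesis by (simp add: L_def b_def)
qed

section \<open>The Bloch space\<close>

lemma bloch_spaceE:
  assumes "f \<in> bloch_space"
  obtains M where "bloch_bounded f M"
proof -
  obtain M where "analytic_fun f" "\<forall>x\<in>unit_ball. (1 - (norm x)^2) * onorm (fderiv f x) \<le> M"
    using assms by (auto simp: bloch_space_def bdd_above_def)
  then have "bloch_bounded f M" by unfold_locales (auto simp: mem_unit_ball)
  then show thesis by (rule that)
qed

context bloch_bounded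
begin

lemma onorm_fderiv_comp_mobius_le_inv_seminorm:
  assumes "norm a < 1"
  shows "onorm (fderiv (f \<circ> mobius a) 0) \<le> inv_seminorm f"
proof -
  have "bdd_above ((\<lambda>a. onorm (fderiv (f \<circ> mobius a) 0)) ` unit_ball)"
    using onorm_fderiv_comp_mobius_le by (intro bdd_aboveI2) (simp add: mem_unit_ball)
  then show ?thesis
    unfolding inv_seminorm_def by (rule cSUP_upper[rotated]) (simp add: mem_unit_ball assms)
qed

lemma bloch_bounded_inv_seminorm: "bloch_bounded f (inv_seminorm f)"
proof
  show "analytic_fun f" by (rule analytic)
  show "(1 - (norm x)^2) * onorm (fderiv f x) \<le> inv_seminorm f" if "norm x < 1" for x
    using weighted_onorm_fderiv_le_comp_mobius[OF analytic that]
      onorm_fderiv_comp_mobius_le_inv_seminorm[OF that] by linarith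
qed

lemma norm_diff_zero_le:
  assumes b: "norm b < 1"
  shows "cmod (f b - f 0) \<le> norm b / (1 - (norm b)^2) * M"
proof -
  have "cmod (f b - f 0) \<le> M / (1 - (norm b)^2) * norm (b - 0)"
  proof (rule norm_diff_le_segment)
    fix p assume "p \<in> closed_segment 0 b"
    then obtain u where u: "0 \<le> u" "u \<le> 1" "p = scaleR u b" unfolding closed_segment_def by auto
    then have "norm p \<le> norm b" by (simp add: mult_left_le_one_le)
    then show "norm p < 1 \<and> 1 - (norm b)^2 \<le> 1 - (norm p)^2"
      using b by (simp add: power_mono)
  qed (use b in \<open>simp add: abs_square_less_1\<close>)
  then show ?thesis by (simp add: mult.commute)
qed

end

lemma comp_self_map_bloch_space:
  assumes f: "f \<in> bloch_space" and \<phi>: "analytic_self_map \<phi>"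
  shows "f \<circ> \<phi> \<in> bloch_space" and "inv_seminorm (f \<circ> \<phi>) \<le> inv_seminorm f"
proof -
  obtain M where "bloch_bounded f M" using f by (rule bloch_spaceE)
  then interpret bloch_bounded f M .
  have fA: "analytic_fun (f \<circ> \<phi>)" by (rule analytic_fun_comp_self_map[OF analytic \<phi>])
  have key: "onorm (fderiv ((f \<circ> \<phi>) \<circ> mobius x) 0) \<le> inv_seminorm f" if "norm x < 1" for x
    using onorm_fderiv_comp_self_map_mobius_le[OF analytic \<phi> that]
      onorm_fderiv_comp_mobius_le_inv_seminorm[OF analytic_self_mapD(1)[OF \<phi> that]] by linarith
  have "(1 - (norm x)^2) * onorm (fderiv (f \<circ> \<phi>) x) \<le> inv_seminorm f" if "norm x < 1" for x
    using weighted_onorm_fderiv_le_comp_mobius[OF fA that] key[OF that] by linarith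
  then show "f \<circ> \<phi> \<in> bloch_space"
    using fA unfolding bloch_space_def bdd_above_def mem_unit_ball[symmetric] by blast
  show "inv_seminorm (f \<circ> \<phi>) \<le> inv_seminorm f"
    unfolding inv_seminorm_def[of "f \<circ> \<phi>"]
    by (rule cSUP_least) (use key in \<open>auto simp: unit_ball_def\<close>)
qed

theorem theorem4p1:
  fixes \<phi> :: "'a::chilbert \<Rightarrow> 'a"
  assumes "analytic_self_map \<phi>"
  shows "\<exists>C. \<forall>f \<in> (bloch_space :: ('a \<Rightarrow> complex) set).
           f \<circ> \<phi> \<in> bloch_space \<and> bloch_norm (f \<circ> \<phi>) \<le> C * bloch_norm f"
proof (intro exI ballI conjI)
  define K where "K = norm (\<phi> 0) / (1 - (norm (\<phi> 0))^2)"
  have c: "norm (\<phi> 0) < 1" using analytic_self_mapD(1)[OF assms, of 0] by simp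
  then have K: "0 \<le> K" by (simp add: K_def abs_square_le_1)
  fix f :: "'a \<Rightarrow> complex"
  assume f: "f \<in> bloch_space"
  show "f \<circ> \<phi> \<in> bloch_space" by (rule comp_self_map_bloch_space(1)[OF f assms])
  obtain M where "bloch_bounded f M" using f by (rule bloch_spaceE)
  then interpret bloch_bounded f M .
  have "cmod (f (\<phi> 0) - f 0) \<le> K * inv_seminorm f"
    unfolding K_def by (rule bloch_bounded.norm_diff_zero_le[OF bloch_bounded_inv_seminorm c])
  then have "cmod (f (\<phi> 0)) \<le> cmod (f 0) + K * inv_seminorm f"
    using norm_triangle_sub[of "f (\<phi> 0)" "f 0"] by simp
  then have "bloch_norm (f \<circ> \<phi>) \<le> cmod (f 0) + K * inv_seminorm f + inv_seminorm f"
    using comp_self_map_bloch_space(2)[OF f assms] by (simp add: bloch_norm_def)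
  also have "\<dots> \<le> (1 + K) * bloch_norm f"
    using mult_left_mono[OF norm_ge_zero[of "f 0"] K] by (simp add: bloch_norm_def algebra_simps)
  finally show "bloch_norm (f \<circ> \<phi>) \<le> (1 + K) * bloch_norm f" .
qed

end
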